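(* Let $(E_j)_{j\in J}$ be a family of nonzero complete metrizable topological vector spaces with $J$ uncountable, and let $E_0=\{(x_j)\in\prod_{j\in J}E_j:|\{j:x_j\ne0\}|\le\aleph_0\}$ be the $\Sigma$-product, with the subspace topology of the product. Then $E_0$ is a Baire, non-metrizable Fréchet–Urysohn topological vector space which does not have countable $cn$-character.
   Context: For $x\in X$, a family $\mathcal{N}$ of subsets of $X$ is a $cn$-network at $x$ if for each neighborhood $O_x$ of $x$ the set $\bigcup\{N\in\mathcal{N}:x\in N\subseteq O_x\}$ is a neighborhood of $x$; the $cn$-character of $X$ is the supremum over $x$ of the least cardinality of a $cn$-network at $x$. *)

theory Defs
  imports "HOL-Analysis.Analysis"
begin

definition is_tvs ::
  "'a set \<Rightarrow> 'a topology \<Rightarrow> ('a \<Rightarrow> 'a \<Rightarrow> 'a) \<Rightarrow> (real \<Rightarrow> 'a \<Rightarrow> 'a) \<Rightarrow> 'a \<Rightarrow> bool" where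
  "is_tvs V X add smul z \<longleftrightarrow>
     topspace X = V \<and> z \<in> V \<and>
     (\<forall>x\<in>V. \<forall>y\<in>V. add x y \<in> V) \<and>
     (\<forall>c. \<forall>x\<in>V. smul c x \<in> V) \<and>
     (\<forall>x\<in>V. \<forall>y\<in>V. \<forall>w\<in>V. add (add x y) w = add x (add y w)) \<and>
     (\<forall>x\<in>V. \<forall>y\<in>V. add x y = add y x) \<and>
     (\<forall>x\<in>V. add z x = x) \<and>
     (\<forall>x\<in>V. \<exists>y\<in>V. add x y = z) \<and>
     (\<forall>a b. \<forall>x\<in>V. smul a (smul b x) = smul (a * b) x) \<and>
     (\<forall>x\<in>V. smul 1 x = x) \<and>
     (\<forall>a. \<forall>x\<in>V. \<forall>y\<in>V. smul a (add x y) = add (smul a x) (smul a y)) \<and>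
     (\<forall>a b. \<forall>x\<in>V. smul (a + b) x = add (smul a x) (smul b x)) \<and>
     continuous_map (prod_topology X X) X (\<lambda>(x, y). add x y) \<and>
     continuous_map (prod_topology euclideanreal X) X (\<lambda>(c, x). smul c x)"

definition Baire_space :: "'a topology \<Rightarrow> bool" where
  "Baire_space X \<longleftrightarrow>
     (\<forall>\<G>. countable \<G> \<and> (\<forall>U\<in>\<G>. openin X U \<and> X closure_of U = topspace X)
        \<longrightarrow> X closure_of (topspace X \<inter> \<Inter>\<G>) = topspace X)"

definition Frechet_Urysohn_space :: "'a topology \<Rightarrow> bool" where
  "Frechet_Urysohn_space X \<longleftrightarrow>
     (\<forall>A x. A \<subseteq> topspace X \<and> x \<in> X closure_of A \<longrightarrow>
        (\<exists>f. range f \<subseteq> A \<and> limitin X f x sequentially))"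

definition nbhd_in :: "'a topology \<Rightarrow> 'a \<Rightarrow> 'a set \<Rightarrow> bool" where
  "nbhd_in X x V \<longleftrightarrow> V \<subseteq> topspace X \<and> (\<exists>U. openin X U \<and> x \<in> U \<and> U \<subseteq> V)"

definition cn_network :: "'a topology \<Rightarrow> 'a \<Rightarrow> 'a set set \<Rightarrow> bool" where
  "cn_network X x \<N> \<longleftrightarrow>
     (\<forall>N\<in>\<N>. N \<subseteq> topspace X) \<and>
     (\<forall>W. nbhd_in X x W \<longrightarrow> nbhd_in X x (\<Union>{N\<in>\<N>. x \<in> N \<and> N \<subseteq> W}))"

text \<open>Countable cn-character: the supremum over all points of the least cardinality of a
  cn-network at the point is at most aleph_0, i.e. every point has a countable cn-network.\<close>
definition countable_cn_character :: "'a topology \<Rightarrow> bool" where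
  "countable_cn_character X \<longleftrightarrow>
     (\<forall>x\<in>topspace X. \<exists>\<N>. countable \<N> \<and> cn_network X x \<N>)"

definition Sigma_product :: "'j set \<Rightarrow> ('j \<Rightarrow> 'a::real_vector set) \<Rightarrow> ('j \<Rightarrow> 'a) set" where
  "Sigma_product J E = {x \<in> PiE J E. countable {j\<in>J. x j \<noteq> 0}}"

definition Sigma_topology :: "'j set \<Rightarrow> ('j \<Rightarrow> 'a::real_vector topology) \<Rightarrow> ('j \<Rightarrow> 'a) topology" where
  "Sigma_topology J T = subtopology (product_topology T J) (Sigma_product J (\<lambda>j. topspace (T j)))"

definition prod_add :: "'j set \<Rightarrow> ('j \<Rightarrow> 'a::real_vector) \<Rightarrow> ('j \<Rightarrow> 'a) \<Rightarrow> ('j \<Rightarrow> 'a)" where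
  "prod_add J x y = restrict (\<lambda>j. x j + y j) J"

definition prod_smul :: "'j set \<Rightarrow> real \<Rightarrow> ('j \<Rightarrow> 'a::real_vector) \<Rightarrow> ('j \<Rightarrow> 'a)" where
  "prod_smul J c x = restrict (\<lambda>j. c *\<^sub>R x j) J"

definition prod_zero :: "'j set \<Rightarrow> ('j \<Rightarrow> 'a::real_vector)" where
  "prod_zero J = restrict (\<lambda>j. 0) J"

end

theory Submission
  imports Defs
begin

text \<open>
  The Baire and Frechet--Urysohn properties come from one diagonal construction. A sequence of
  points of the \<open>\<Sigma>\<close>-product is built in which stage \<open>n\<close> controls only finitely many
  coordinates; a bookkeeping over enumerations of the countable supports makes every coordinate
  that is ever nonzero controlled from some stage on, while all other coordinates stay \<open>0\<close>.
  For the Frechet--Urysohn property the points are chosen in \<open>A\<close> and in ever smaller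
  neighbourhoods of \<open>x\<close>; for the Baire property they come with shrinking basic boxes inside the
  given dense open sets, and completeness of the factors yields a point in all of them.

  Countable \<open>cn\<close>-character fails already at \<open>0\<close>: a countable family constrains only countably
  many coordinates through members that constrain finitely many, so some coordinate \<open>j\<close> is
  constrained only by members constraining infinitely many. Changing one such coordinate for
  each member, outside the finitely many coordinates restricted by a basic neighbourhood, gives a
  point of that neighbourhood outside every member inside the cylinder at \<open>j\<close>. Metrizability
  would imply first countability and hence countable \<open>cn\<close>-character.
\<close>

section \<open>Bookkeeping along countable supports\<close>

lemma dependent_choice_enumerating_supports:
  fixes supp :: "'s \<Rightarrow> 'j set"
  assumes "P s0" and countable_supp: "\<And>s. P s \<Longrightarrow> countable (supp s)"
    and step: "\<And>n F s. finite F \<Longrightarrow> P s \<Longrightarrow> \<exists>s'. P s' \<and> R n F s s'"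
  shows "\<exists>x e. x 0 = s0 \<and> (\<forall>n. P (x n) \<and> supp (x n) \<subseteq> range (e n)
            \<and> R n (\<Union>m\<le>n. e m ` {..n}) (x n) (x (Suc n)))"
proof -
  \<comment> \<open>Besides the current point, the state records an enumeration of the support of every
    earlier point; a step only appends the enumeration of the support of the new point.\<close>
  define Fin :: "nat \<Rightarrow> (nat \<Rightarrow> nat \<Rightarrow> 'j) \<Rightarrow> 'j set"
    where "Fin n e = (\<Union>m\<le>n. e m ` {..n})" for n e
  define P' :: "nat \<Rightarrow> 's \<times> (nat \<Rightarrow> nat \<Rightarrow> 'j) \<Rightarrow> bool"
    where "P' n se \<longleftrightarrow> P (fst se) \<and> (n = 0 \<longrightarrow> fst se = s0) \<and> supp (fst se) \<subseteq> range (snd se n)"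
    for n se
  define Q' :: "nat \<Rightarrow> 's \<times> (nat \<Rightarrow> nat \<Rightarrow> 'j) \<Rightarrow> 's \<times> (nat \<Rightarrow> nat \<Rightarrow> 'j) \<Rightarrow> bool"
    where "Q' n se se' \<longleftrightarrow> R n (Fin n (snd se)) (fst se) (fst se') \<and> (\<forall>m\<le>n. snd se' m = snd se m)"
    for n se se'
  have "P' 0 (s0, \<lambda>_. from_nat_into (supp s0))"
    using assms(1) countable_supp subset_range_from_nat_into unfolding P'_def by auto
  moreover have "\<exists>se'. P' (Suc n) se' \<and> Q' n se se'" if "P' n se" for n se
  proof -
    obtain s e where se: "se = (s, e)"
      by fastforce
    have "P s" "finite (Fin n e)"
      using that unfolding se P'_def Fin_def by simp_all
    then obtain s' where "P s'" "R n (Fin n e) s s'"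
      using step by blast
    then have "P' (Suc n) (s', e(Suc n := from_nat_into (supp s')))
        \<and> Q' n se (s', e(Suc n := from_nat_into (supp s')))"
      using countable_supp subset_range_from_nat_into unfolding se P'_def Q'_def by auto
    then show ?thesis ..
  qed
  ultimately obtain f where f: "\<And>n. P' n (f n) \<and> Q' n (f n) (f (Suc n))"
    using dependent_nat_choice[of P' Q'] by blast
  define e where "e n = snd (f n)" for n
  have e_stable: "e n m = e m m" if "m \<le> n" for m n
    using that
  proof (induction n)
    case (Suc n)
    then show ?case
      using f[of n] unfolding Q'_def e_def by (cases "m = Suc n") auto
  qed simp
  have "Fin n (e n) = (\<Union>m\<le>n. e m m ` {..n})" for n
    unfolding Fin_def by (rule SUP_cong[OF refl]) (metis atMost_iff e_stable)
  then show ?thesis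
    using f[of 0] f unfolding P'_def Q'_def e_def
    by (intro exI[of _ "\<lambda>n. fst (f n)"] exI[of _ "\<lambda>n. e n n"]) (simp add: e_def)
qed

lemma diagonal_bookkeeping:
  fixes supp :: "'s \<Rightarrow> 'j set"
  assumes "P s0" and "\<And>s. P s \<Longrightarrow> countable (supp s)"
    and "\<And>n F s. finite F \<Longrightarrow> P s \<Longrightarrow> \<exists>s'. P s' \<and> R n F s s'"
  shows "\<exists>x F. x 0 = s0 \<and> (\<forall>n. P (x n) \<and> finite (F n) \<and> R n (F n) (x n) (x (Suc n)))
            \<and> (\<forall>l. \<forall>i\<in>supp (x l). \<forall>\<^sub>F n in sequentially. i \<in> F n)"
proof -
  obtain x e where x: "x 0 = s0"
    and step: "\<And>n. P (x n) \<and> supp (x n) \<subseteq> range (e n) \<and> R n (\<Union>m\<le>n. e m ` {..n}) (x n) (x (Suc n))"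
    using dependent_choice_enumerating_supports[of P s0 supp R, OF assms] by blast
  have "\<forall>\<^sub>F n in sequentially. i \<in> (\<Union>m\<le>n. e m ` {..n})" if i: "i \<in> supp (x l)" for l i
  proof -
    obtain k where "i = e l k"
      using i step[of l] by blast
    then have "i \<in> (\<Union>m\<le>n. e m ` {..n})" if "max l k \<le> n" for n
      using that by auto
    then show ?thesis
      unfolding eventually_sequentially by blast
  qed
  then show ?thesis
    using x step by (intro exI[of _ x] exI[of _ "\<lambda>n. \<Union>m\<le>n. e m ` {..n}"]) auto
qed

section \<open>Neighbourhood bases and complete metrics\<close>

lemma first_countable_imp_countable_cn_character:
  assumes "first_countable X"
  shows "countable_cn_character X"
  unfolding countable_cn_character_def
proof
  fix x assume "x \<in> topspace X"
  then obtain \<B> where "countable \<B>" and open_\<B>: "\<And>V. V \<in> \<B> \<Longrightarrow> openin X V"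
    and base: "\<And>U. openin X U \<Longrightarrow> x \<in> U \<Longrightarrow> \<exists>V\<in>\<B>. x \<in> V \<and> V \<subseteq> U"
    using assms unfolding first_countable_def by meson
  have "nbhd_in X x (\<Union>{N \<in> \<B>. x \<in> N \<and> N \<subseteq> W})" if W: "nbhd_in X x W" for W
  proof -
    obtain U where "openin X U" "x \<in> U" "U \<subseteq> W" "W \<subseteq> topspace X"
      using W unfolding nbhd_in_def by blast
    moreover obtain V where "V \<in> \<B>" "x \<in> V" "V \<subseteq> U"
      using base[OF \<open>openin X U\<close> \<open>x \<in> U\<close>] by blast
    ultimately have "openin X V" "x \<in> V" "V \<subseteq> \<Union>{N \<in> \<B>. x \<in> N \<and> N \<subseteq> W}"
      and "\<Union>{N \<in> \<B>. x \<in> N \<and> N \<subseteq> W} \<subseteq> topspace X"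
      using open_\<B> by auto
    then show ?thesis
      unfolding nbhd_in_def by blast
  qed
  moreover have "N \<subseteq> topspace X" if "N \<in> \<B>" for N
    using open_\<B>[OF that] by (rule openin_subset)
  ultimately have "cn_network X x \<B>"
    unfolding cn_network_def by blast
  with \<open>countable \<B>\<close> show "\<exists>\<N>. countable \<N> \<and> cn_network X x \<N>"
    by blast
qed

lemma first_countable_nbhd_sequence:
  assumes "first_countable X" "x \<in> topspace X"
  shows "\<exists>b :: nat \<Rightarrow> 'a set. (\<forall>k. openin X (b k) \<and> x \<in> b k)
           \<and> (\<forall>U. openin X U \<and> x \<in> U \<longrightarrow> (\<exists>k. b k \<subseteq> U))"
proof -
  obtain \<B> where "countable \<B>" and open_\<B>: "\<And>V. V \<in> \<B> \<Longrightarrow> openin X V"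
    and base: "\<And>U. openin X U \<Longrightarrow> x \<in> U \<Longrightarrow> \<exists>V\<in>\<B>. x \<in> V \<and> V \<subseteq> U"
    using assms unfolding first_countable_def by meson
  define \<B>\<^sub>x where "\<B>\<^sub>x = {V \<in> \<B>. x \<in> V}"
  have "\<B>\<^sub>x \<noteq> {}"
    using base[of "topspace X"] assms(2) unfolding \<B>\<^sub>x_def by auto
  moreover have "countable \<B>\<^sub>x"
    using \<open>countable \<B>\<close> unfolding \<B>\<^sub>x_def by simp
  ultimately have range: "range (from_nat_into \<B>\<^sub>x) = \<B>\<^sub>x"
    by (rule range_from_nat_into)
  have "openin X (from_nat_into \<B>\<^sub>x k) \<and> x \<in> from_nat_into \<B>\<^sub>x k" for k
    using range open_\<B> unfolding \<B>\<^sub>x_def by blast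
  moreover have "\<exists>k. from_nat_into \<B>\<^sub>x k \<subseteq> U" if "openin X U" "x \<in> U" for U
  proof -
    obtain V where "V \<in> \<B>\<^sub>x" "V \<subseteq> U"
      using base[OF \<open>openin X U\<close> \<open>x \<in> U\<close>] unfolding \<B>\<^sub>x_def by blast
    then show ?thesis
      using range by (metis rangeE)
  qed
  ultimately show ?thesis
    by blast
qed

lemma limitin_sequentially_nbhd_sequence:
  assumes "x \<in> topspace X" and "\<And>U. openin X U \<Longrightarrow> x \<in> U \<Longrightarrow> \<exists>k. b k \<subseteq> U"
    and "\<forall>\<^sub>F n in sequentially. \<forall>k\<le>n. f n \<in> b k"
  shows "limitin X f x sequentially"
  unfolding limitin_def
proof (intro conjI allI impI)
  fix U assume "openin X U \<and> x \<in> U"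
  then obtain k where "b k \<subseteq> U"
    using assms(2) by blast
  have "\<forall>\<^sub>F n in sequentially. k \<le> n"
    by (rule eventually_ge_at_top)
  with assms(3) show "\<forall>\<^sub>F n in sequentially. f n \<in> U"
    by eventually_elim (use \<open>b k \<subseteq> U\<close> in blast)
qed (rule assms(1))

lemma closure_of_nested_antimono:
  assumes "\<And>n. openin X (U n)" "\<And>n. X closure_of U (Suc n) \<subseteq> U n" "n \<le> m"
  shows "U m \<subseteq> U n"
proof -
  have "U (Suc k) \<subseteq> U k" for k
    using assms(2)[of k] closure_of_subset[OF openin_subset[OF assms(1)]] by blast
  then show ?thesis
    using lift_Suc_antimono_le[of U] assms(3) by blast
qed

lemma (in Metric_space) small_nbhd_closure_inside:
  assumes "openin mtopology U" "p \<in> U" "e > 0"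
  shows "\<exists>V. openin mtopology V \<and> p \<in> V \<and> mtopology closure_of V \<subseteq> U
           \<and> (\<forall>a\<in>V. \<forall>b\<in>V. d a b < e)"
proof -
  obtain r where "r > 0" "mball p r \<subseteq> U"
    using assms(1,2) unfolding openin_mtopology by blast
  define s where "s = min (r / 2) (e / 2)"
  have "s > 0"
    using \<open>r > 0\<close> assms(3) unfolding s_def by simp
  have "mtopology closure_of mball p s \<subseteq> mcball p s"
    by (rule closure_of_minimal[OF mball_subset_mcball closedin_mcball])
  also have "\<dots> \<subseteq> mball p r"
    by (rule mcball_subset_mball_concentric) (use \<open>r > 0\<close> in \<open>simp add: s_def\<close>)
  finally have "mtopology closure_of mball p s \<subseteq> U"
    using \<open>mball p r \<subseteq> U\<close> by blast
  moreover have "d a b < e" if "a \<in> mball p s" "b \<in> mball p s" for a b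
  proof -
    have "d a b \<le> d a p + d p b"
      using that by (auto intro: triangle)
    then show ?thesis
      using that commute[of a p] unfolding s_def by auto
  qed
  moreover have "p \<in> mball p s"
    using assms(1,2) openin_subset \<open>s > 0\<close> by fastforce
  ultimately show ?thesis
    by (intro exI[of _ "mball p s"]) auto
qed

lemma (in Metric_space) MCauchy_nested:
  assumes "range \<sigma> \<subseteq> M" and "\<And>n m. n \<le> m \<Longrightarrow> \<sigma> m \<in> A n"
    and "\<forall>\<^sub>F n in sequentially. \<forall>a\<in>A n. \<forall>b\<in>A n. d a b < r n" and "r \<longlonglongrightarrow> 0"
  shows "MCauchy \<sigma>"
  unfolding MCauchy_def
proof (intro conjI allI impI)
  fix \<epsilon> :: real assume "\<epsilon> > 0"
  then have "\<forall>\<^sub>F n in sequentially. r n < \<epsilon>"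
    using \<open>r \<longlonglongrightarrow> 0\<close> by (rule order_tendstoD(2)[rotated])
  with assms(3) obtain N where "r N < \<epsilon>" "\<forall>a\<in>A N. \<forall>b\<in>A N. d a b < r N"
    by (metis (mono_tags, lifting) eventually_conj eventually_sequentially order_refl)
  then show "\<exists>N. \<forall>n n'. N \<le> n \<longrightarrow> N \<le> n' \<longrightarrow> d (\<sigma> n) (\<sigma> n') < \<epsilon>"
    using assms(2) by (metis order.strict_trans)
qed (use assms(1) in simp)

lemma (in Metric_space) nested_shrinking_convergent:
  assumes "mcomplete" and "\<And>n. openin mtopology (A n)"
    and "\<And>n. mtopology closure_of A (Suc n) \<subseteq> A n" and "\<And>m. \<sigma> m \<in> A m"
    and "\<forall>\<^sub>F n in sequentially. \<forall>a\<in>A (Suc n). \<forall>b\<in>A (Suc n). d a b < inverse (real (Suc n))"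
  shows "\<exists>l. limitin mtopology \<sigma> l sequentially"
proof -
  have "MCauchy \<sigma>"
  proof (rule MCauchy_nested[where r="\<lambda>n. inverse (real n)"])
    show "range \<sigma> \<subseteq> M"
      using assms(2,4) openin_subset by fastforce
    show "\<sigma> m \<in> A n" if "n \<le> m" for n m
      using closure_of_nested_antimono[of mtopology A, OF assms(2,3) that] assms(4) by blast
    show "\<forall>\<^sub>F n in sequentially. \<forall>a\<in>A n. \<forall>b\<in>A n. d a b < inverse (real n)"
      using assms(5) by (subst eventually_sequentially_Suc[symmetric]) simp
  qed (rule lim_inverse_n)
  then show ?thesis
    using \<open>mcomplete\<close> unfolding mcomplete_def by blast
qed

lemma completely_metrizable_family_metrics:
  assumes "\<And>j. j \<in> J \<Longrightarrow> completely_metrizable_space (T j)"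
  shows "\<exists>M d. \<forall>j\<in>J. Metric_space (M j) (d j) \<and> Metric_space.mcomplete (M j) (d j)
           \<and> T j = Metric_space.mtopology (M j) (d j)"
proof -
  have "\<forall>j\<in>J. \<exists>Md. Metric_space (fst Md) (snd Md) \<and> Metric_space.mcomplete (fst Md) (snd Md)
      \<and> T j = Metric_space.mtopology (fst Md) (snd Md)"
    using assms unfolding completely_metrizable_space_def by fastforce
  then obtain Md where "\<forall>j\<in>J. Metric_space (fst (Md j)) (snd (Md j))
      \<and> Metric_space.mcomplete (fst (Md j)) (snd (Md j)) \<and> T j = Metric_space.mtopology (fst (Md j)) (snd (Md j))"
    by (rule bchoice[THEN exE])
  then show ?thesis
    by (intro exI[of _ "\<lambda>j. fst (Md j)"] exI[of _ "\<lambda>j. snd (Md j)"])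
qed

section \<open>The \<open>\<Sigma>\<close>-product topology\<close>

lemma topspace_Sigma_topology [simp]:
  "topspace (Sigma_topology J T) = Sigma_product J (\<lambda>j. topspace (T j))"
  unfolding Sigma_topology_def Sigma_product_def by auto

lemma Sigma_product_subset_PiE: "Sigma_product J E \<subseteq> Pi\<^sub>E J E"
  unfolding Sigma_product_def by auto

lemma Sigma_product_extensional: "x \<in> Sigma_product J E \<Longrightarrow> x \<in> extensional J"
  unfolding Sigma_product_def by (simp add: PiE_def)

lemma Sigma_product_coordinate: "x \<in> Sigma_product J E \<Longrightarrow> j \<in> J \<Longrightarrow> x j \<in> E j"
  unfolding Sigma_product_def by auto

lemma prod_zero_in_Sigma_product:
  "(\<And>j. j \<in> J \<Longrightarrow> 0 \<in> E j) \<Longrightarrow> prod_zero J \<in> Sigma_product J E"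
  unfolding Sigma_product_def prod_zero_def by auto

lemma continuous_map_Sigma_projection:
  "j \<in> J \<Longrightarrow> continuous_map (Sigma_topology J T) (T j) (\<lambda>x. x j)"
  unfolding Sigma_topology_def
  by (intro continuous_map_from_subtopology continuous_map_product_projection)

lemma openin_Sigma_topology_cylinder:
  "j \<in> J \<Longrightarrow> openin (T j) U
    \<Longrightarrow> openin (Sigma_topology J T) {x \<in> topspace (Sigma_topology J T). x j \<in> U}"
  by (rule openin_continuous_map_preimage[OF continuous_map_Sigma_projection])

lemma continuous_map_into_Sigma_topology:
  assumes "\<And>j. j \<in> J \<Longrightarrow> continuous_map Z (T j) (\<lambda>z. f z j)"
    and "f ` topspace Z \<subseteq> Sigma_product J (\<lambda>j. topspace (T j))"
  shows "continuous_map Z (Sigma_topology J T) f"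
proof -
  have "f ` topspace Z \<subseteq> extensional J"
    using assms(2) Sigma_product_subset_PiE by (fastforce simp: PiE_def)
  then show ?thesis
    using assms unfolding Sigma_topology_def
    by (simp add: continuous_map_in_subtopology continuous_map_componentwise image_subset_iff_funcset)
qed

lemma limitin_Sigma_topology:
  "limitin (Sigma_topology J T) f x F \<longleftrightarrow>
     x \<in> Sigma_product J (\<lambda>j. topspace (T j))
     \<and> (\<forall>\<^sub>F n in F. f n \<in> Sigma_product J (\<lambda>j. topspace (T j)))
     \<and> (\<forall>i\<in>J. limitin (T i) (\<lambda>n. f n i) (x i) F)"
proof -
  have sub: "Sigma_product J (\<lambda>j. topspace (T j)) \<subseteq> topspace (product_topology T J) \<inter> extensional J"
    using Sigma_product_subset_PiE by (fastforce simp: PiE_def)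
  have "\<forall>\<^sub>F n in F. f n \<in> topspace (product_topology T J)"
    if "\<forall>\<^sub>F n in F. f n \<in> Sigma_product J (\<lambda>j. topspace (T j))"
    using that by (rule eventually_mono) (use sub in blast)
  then show ?thesis
    unfolding Sigma_topology_def limitin_subtopology limitin_componentwise
    using sub by blast
qed

definition open_box :: "'j set \<Rightarrow> ('j \<Rightarrow> 'a topology) \<Rightarrow> ('j \<Rightarrow> 'a set) \<Rightarrow> bool" where
  "open_box J T U \<longleftrightarrow> (\<forall>i\<in>J. openin (T i) (U i)) \<and> finite {i \<in> J. U i \<noteq> topspace (T i)}"

lemma open_box_Int:
  assumes "open_box J T U" "open_box J T V"
  shows "open_box J T (\<lambda>i. U i \<inter> V i)"
proof -
  have "{i \<in> J. U i \<inter> V i \<noteq> topspace (T i)}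
      \<subseteq> {i \<in> J. U i \<noteq> topspace (T i)} \<union> {i \<in> J. V i \<noteq> topspace (T i)}"
    by auto
  then show ?thesis
    using assms unfolding open_box_def by (auto intro: finite_subset)
qed

lemma openin_Sigma_topology_box:
  "open_box J T U
    \<Longrightarrow> openin (Sigma_topology J T) (Sigma_product J (\<lambda>j. topspace (T j)) \<inter> Pi\<^sub>E J U)"
  unfolding Sigma_topology_def openin_subtopology open_box_def
  by (rule exI[of _ "Pi\<^sub>E J U"]) (auto simp: openin_PiE_gen)

lemma openin_Sigma_topology_imp_box:
  assumes "openin (Sigma_topology J T) Q" "x \<in> Q"
  obtains U where "open_box J T U" "x \<in> Pi\<^sub>E J U"
    "Sigma_product J (\<lambda>j. topspace (T j)) \<inter> Pi\<^sub>E J U \<subseteq> Q"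
proof -
  obtain Q' where "openin (product_topology T J) Q'"
    and Q: "Q = Q' \<inter> Sigma_product J (\<lambda>j. topspace (T j))"
    using assms(1) unfolding Sigma_topology_def openin_subtopology by blast
  moreover have "x \<in> Q'"
    using assms(2) Q by blast
  ultimately obtain U where "open_box J T U" "x \<in> Pi\<^sub>E J U" "Pi\<^sub>E J U \<subseteq> Q'"
    unfolding openin_product_topology_alt open_box_def by meson
  then show thesis
    using that Q by blast
qed

section \<open>Linear structure\<close>

lemma prod_add_in_Sigma_product:
  assumes "\<And>j. j \<in> J \<Longrightarrow> \<forall>a\<in>E j. \<forall>b\<in>E j. a + b \<in> E j"
    and "x \<in> Sigma_product J E" "y \<in> Sigma_product J E"
  shows "prod_add J x y \<in> Sigma_product J E"
proof -
  have "{j\<in>J. prod_add J x y j \<noteq> 0} \<subseteq> {j\<in>J. x j \<noteq> 0} \<union> {j\<in>J. y j \<noteq> 0}"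
    unfolding prod_add_def by auto
  then show ?thesis
    using assms countable_subset unfolding Sigma_product_def prod_add_def by fastforce
qed

lemma prod_smul_in_Sigma_product:
  assumes "\<And>j. j \<in> J \<Longrightarrow> \<forall>a\<in>E j. c *\<^sub>R a \<in> E j" and "x \<in> Sigma_product J E"
  shows "prod_smul J c x \<in> Sigma_product J E"
proof -
  have "{j\<in>J. prod_smul J c x j \<noteq> 0} \<subseteq> {j\<in>J. x j \<noteq> 0}"
    unfolding prod_smul_def by auto
  then show ?thesis
    using assms countable_subset unfolding Sigma_product_def prod_smul_def by fastforce
qed

lemma continuous_map_prod_add_Sigma:
  assumes "\<And>j. j \<in> J \<Longrightarrow> continuous_map (prod_topology (T j) (T j)) (T j) (\<lambda>(a, b). a + b)"
    and "\<And>j. j \<in> J \<Longrightarrow> \<forall>a\<in>topspace (T j). \<forall>b\<in>topspace (T j). a + b \<in> topspace (T j)"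
  shows "continuous_map (prod_topology (Sigma_topology J T) (Sigma_topology J T)) (Sigma_topology J T)
           (\<lambda>(x, y). prod_add J x y)"
proof (rule continuous_map_into_Sigma_topology)
  fix j assume j: "j \<in> J"
  have "continuous_map (prod_topology (Sigma_topology J T) (Sigma_topology J T)) (prod_topology (T j) (T j))
          (\<lambda>z. (fst z j, snd z j))"
    using continuous_map_compose[OF continuous_map_fst continuous_map_Sigma_projection[OF j]]
      continuous_map_compose[OF continuous_map_snd continuous_map_Sigma_projection[OF j]]
    by (intro continuous_map_pairedI) (simp_all add: o_def)
  from continuous_map_compose[OF this assms(1)[OF j]]
  show "continuous_map (prod_topology (Sigma_topology J T) (Sigma_topology J T)) (T j)
          (\<lambda>z. (case z of (x, y) \<Rightarrow> prod_add J x y) j)"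
    using j by (simp add: prod_add_def o_def case_prod_beta)
qed (auto intro!: prod_add_in_Sigma_product assms(2))

lemma continuous_map_prod_smul_Sigma:
  assumes "\<And>j. j \<in> J \<Longrightarrow> continuous_map (prod_topology euclideanreal (T j)) (T j) (\<lambda>(c, a). c *\<^sub>R a)"
    and "\<And>j. j \<in> J \<Longrightarrow> \<forall>c. \<forall>a\<in>topspace (T j). c *\<^sub>R a \<in> topspace (T j)"
  shows "continuous_map (prod_topology euclideanreal (Sigma_topology J T)) (Sigma_topology J T)
           (\<lambda>(c, x). prod_smul J c x)"
proof (rule continuous_map_into_Sigma_topology)
  fix j assume j: "j \<in> J"
  have "continuous_map (prod_topology euclideanreal (Sigma_topology J T)) (prod_topology euclideanreal (T j))
          (\<lambda>z. (fst z, snd z j))"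
    using continuous_map_compose[OF continuous_map_snd continuous_map_Sigma_projection[OF j]]
    by (intro continuous_map_pairedI continuous_map_fst) (simp add: o_def)
  from continuous_map_compose[OF this assms(1)[OF j]]
  show "continuous_map (prod_topology euclideanreal (Sigma_topology J T)) (T j)
          (\<lambda>z. (case z of (c, x) \<Rightarrow> prod_smul J c x) j)"
    using j by (simp add: prod_smul_def o_def case_prod_beta)
qed (use assms(2) in \<open>auto intro!: prod_smul_in_Sigma_product\<close>)

lemma is_tvs_Sigma_product:
  assumes tvs: "\<And>j. j \<in> J \<Longrightarrow> is_tvs (topspace (T j)) (T j) (+) (*\<^sub>R) 0"
  shows "is_tvs (Sigma_product J (\<lambda>j. topspace (T j))) (Sigma_topology J T)
           (prod_add J) (prod_smul J) (prod_zero J)"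
proof -
  define S where "S = Sigma_product J (\<lambda>j. topspace (T j))"
  have add_closed: "\<forall>a\<in>topspace (T j). \<forall>b\<in>topspace (T j). a + b \<in> topspace (T j)"
    and smul_closed: "\<forall>c. \<forall>a\<in>topspace (T j). c *\<^sub>R a \<in> topspace (T j)"
    and zero_in: "0 \<in> topspace (T j)"
    and add_cont: "continuous_map (prod_topology (T j) (T j)) (T j) (\<lambda>(a, b). a + b)"
    and smul_cont: "continuous_map (prod_topology euclideanreal (T j)) (T j) (\<lambda>(c, a). c *\<^sub>R a)"
    if "j \<in> J" for j
    by (insert tvs[OF that], simp_all add: is_tvs_def)
  have add_cont_Sigma: "continuous_map (prod_topology (Sigma_topology J T) (Sigma_topology J T))
      (Sigma_topology J T) (\<lambda>(x, y). prod_add J x y)"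
    using add_cont add_closed by (rule continuous_map_prod_add_Sigma)
  have smul_cont_Sigma: "continuous_map (prod_topology euclideanreal (Sigma_topology J T))
      (Sigma_topology J T) (\<lambda>(c, x). prod_smul J c x)"
    using smul_cont smul_closed by (rule continuous_map_prod_smul_Sigma)
  have add: "prod_add J x y \<in> S" if "x \<in> S" "y \<in> S" for x y
    using that unfolding S_def by (rule prod_add_in_Sigma_product[rotated]) (rule add_closed)
  have smul: "prod_smul J c x \<in> S" if "x \<in> S" for x c
    using that unfolding S_def by (rule prod_smul_in_Sigma_product[rotated]) (use smul_closed in blast)
  have zero: "prod_zero J \<in> S"
    unfolding S_def using zero_in by (rule prod_zero_in_Sigma_product)
  have neg: "\<exists>y\<in>S. prod_add J x y = prod_zero J" if "x \<in> S" for x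
    using smul[OF that, of "-1"] unfolding prod_add_def prod_smul_def prod_zero_def by force
  have units: "prod_add J (prod_zero J) x = x" "prod_smul J 1 x = x" if "x \<in> S" for x
    using that Sigma_product_subset_PiE unfolding S_def prod_add_def prod_smul_def prod_zero_def
    by (fastforce simp: PiE_def extensional_def)+
  have laws: "prod_add J (prod_add J x y) w = prod_add J x (prod_add J y w)"
    "prod_add J x y = prod_add J y x"
    "prod_smul J a (prod_smul J b x) = prod_smul J (a * b) x"
    "prod_smul J a (prod_add J x y) = prod_add J (prod_smul J a x) (prod_smul J a y)"
    "prod_smul J (a + b) x = prod_add J (prod_smul J a x) (prod_smul J b x)" for x y w a b
    unfolding prod_add_def prod_smul_def by (auto simp: algebra_simps)
  show ?thesis
    unfolding is_tvs_def topspace_Sigma_topology S_def[symmetric]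
    by (intro conjI ballI allI refl; (rule laws(2) |
        simp add: add smul zero neg units laws(1,3-5) add_cont_Sigma smul_cont_Sigma))
qed

section \<open>The \<open>cn\<close>-character\<close>

lemma Sigma_topology_open_not_covered:
  assumes "countable \<N>"
    and infinite_constrained: "\<And>N. N \<in> \<N> \<Longrightarrow> infinite {i \<in> J. \<forall>x\<in>N. x i \<in> U i}"
    and escape: "\<And>i. i \<in> J \<Longrightarrow> e i \<in> topspace (T i) \<and> e i \<notin> U i"
    and "openin (Sigma_topology J T) Q" "z \<in> Q"
  shows "\<not> Q \<subseteq> \<Union>\<N>"
proof
  assume cover: "Q \<subseteq> \<Union>\<N>"
  define S where "S = Sigma_product J (\<lambda>j. topspace (T j))"
  obtain V where "open_box J T V" "z \<in> Pi\<^sub>E J V" and box: "S \<inter> Pi\<^sub>E J V \<subseteq> Q"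
    using openin_Sigma_topology_imp_box[OF assms(4,5)] unfolding S_def by blast
  define G where "G = {i \<in> J. V i \<noteq> topspace (T i)}"
  have "finite G"
    using \<open>open_box J T V\<close> unfolding open_box_def G_def by simp
  have fresh: "\<forall>N\<in>\<N>. \<exists>i. i \<in> J \<and> (\<forall>x\<in>N. x i \<in> U i) \<and> i \<notin> G"
  proof
    fix N assume "N \<in> \<N>"
    have "{i \<in> J. \<forall>x\<in>N. x i \<in> U i} - G \<noteq> {}"
      using Diff_infinite_finite[OF \<open>finite G\<close> infinite_constrained[OF \<open>N \<in> \<N>\<close>]]
      by (rule infinite_imp_nonempty)
    then show "\<exists>i. i \<in> J \<and> (\<forall>x\<in>N. x i \<in> U i) \<and> i \<notin> G"
      by blast
  qed
  obtain c where c: "\<forall>N\<in>\<N>. c N \<in> J \<and> (\<forall>x\<in>N. x (c N) \<in> U (c N)) \<and> c N \<notin> G"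
    using bchoice[OF fresh] by blast
  \<comment> \<open>Only countably many coordinates change, none of them restricted by the box.\<close>
  define p where "p = restrict (\<lambda>i. if i \<in> c ` \<N> then e i else z i) J"
  have "z \<in> S"
    using openin_subset[OF assms(4)] assms(5) unfolding S_def by auto
  have "p \<in> S"
  proof -
    have "p \<in> Pi\<^sub>E J (\<lambda>j. topspace (T j))"
      using \<open>z \<in> S\<close> escape Sigma_product_subset_PiE unfolding S_def p_def by fastforce
    moreover have "{i \<in> J. p i \<noteq> 0} \<subseteq> c ` \<N> \<union> {i \<in> J. z i \<noteq> 0}"
      unfolding p_def by auto
    moreover have "countable (c ` \<N> \<union> {i \<in> J. z i \<noteq> 0})"
      using \<open>countable \<N>\<close> \<open>z \<in> S\<close> unfolding S_def Sigma_product_def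
      by (intro countable_Un countable_image) auto
    ultimately show ?thesis
      unfolding S_def Sigma_product_def by (blast intro: countable_subset)
  qed
  moreover have "p \<in> Pi\<^sub>E J V"
  proof -
    have "p i \<in> V i" if "i \<in> J" for i
    proof (cases "i \<in> G")
      case True
      then have "p i = z i"
        using c that unfolding p_def by force
      then show ?thesis
        using \<open>z \<in> Pi\<^sub>E J V\<close> that by auto
    next
      case False
      then show ?thesis
        using \<open>p \<in> S\<close> Sigma_product_subset_PiE that unfolding S_def G_def by fastforce
    qed
    then show ?thesis
      unfolding p_def by auto
  qed
  ultimately obtain N where N: "N \<in> \<N>" "p \<in> N"
    using box cover by blast
  then have "p (c N) \<in> U (c N)"
    using c by blast
  moreover have "p (c N) = e (c N)"
    using c N(1) unfolding p_def by auto
  ultimately show False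
    using escape[of "c N"] c N(1) by auto
qed

lemma not_countable_cn_character_Sigma_topology:
  fixes J :: "'j set" and T :: "'j \<Rightarrow> 'a::real_vector topology"
  assumes "uncountable J"
    and zero_in: "\<And>j. j \<in> J \<Longrightarrow> 0 \<in> topspace (T j)"
    and nontrivial: "\<And>j. j \<in> J \<Longrightarrow> topspace (T j) \<noteq> {0}"
    and t1: "\<And>j. j \<in> J \<Longrightarrow> t1_space (T j)"
  shows "\<not> countable_cn_character (Sigma_topology J T)"
proof
  define X where "X = Sigma_topology J T"
  define z :: "'j \<Rightarrow> 'a" where "z = prod_zero J"
  have "z \<in> topspace X"
    unfolding X_def z_def topspace_Sigma_topology using zero_in by (rule prod_zero_in_Sigma_product)
  moreover assume "countable_cn_character (Sigma_topology J T)"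
  ultimately obtain \<N> where "countable \<N>" and cn: "cn_network X z \<N>"
    unfolding countable_cn_character_def X_def by blast
  have "\<forall>j\<in>J. \<exists>e. e \<in> topspace (T j) \<and> e \<noteq> 0"
    using zero_in nontrivial by blast
  then obtain e where e: "\<forall>j\<in>J. e j \<in> topspace (T j) \<and> e j \<noteq> 0"
    by (rule bchoice[THEN exE])
  have "\<forall>j\<in>J. \<exists>U. openin (T j) U \<and> 0 \<in> U \<and> e j \<notin> U"
    using t1 zero_in e unfolding t1_space_def by metis
  then obtain U where U: "\<forall>j\<in>J. openin (T j) (U j) \<and> 0 \<in> U j \<and> e j \<notin> U j"
    by (rule bchoice[THEN exE])
  define constrained where "constrained N = {i \<in> J. \<forall>x\<in>N. x i \<in> U i}" for N :: "('j \<Rightarrow> 'a) set"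
  define K where "K = (\<Union>N\<in>{N \<in> \<N>. finite (constrained N)}. constrained N)"
  \<comment> \<open>Outside \<open>K\<close>, each member of \<open>\<N>\<close> inside the cylinder at \<open>j\<close> constrains infinitely
    many coordinates.\<close>
  have "countable K"
    unfolding K_def using \<open>countable \<N>\<close> by (intro countable_UN) (auto intro: countable_finite)
  then have "\<not> J \<subseteq> K"
    using assms(1) countable_subset by auto
  then obtain j where "j \<in> J" "j \<notin> K"
    by blast
  define W where "W = {x \<in> topspace X. x j \<in> U j}"
  define \<N>\<^sub>j where "\<N>\<^sub>j = {N \<in> \<N>. z \<in> N \<and> N \<subseteq> W}"
  have "openin X W"
    using openin_Sigma_topology_cylinder[OF \<open>j \<in> J\<close>, of T "U j"] U \<open>j \<in> J\<close>
    unfolding W_def X_def by simp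
  moreover have "z \<in> W"
    using U \<open>j \<in> J\<close> \<open>z \<in> topspace X\<close> \<open>j \<in> J\<close> unfolding W_def z_def prod_zero_def by simp
  ultimately have "nbhd_in X z W"
    unfolding nbhd_in_def using openin_subset by blast
  then have "nbhd_in X z (\<Union>\<N>\<^sub>j)"
    using cn unfolding cn_network_def \<N>\<^sub>j_def by blast
  then obtain Q where "openin X Q" "z \<in> Q" "Q \<subseteq> \<Union>\<N>\<^sub>j"
    unfolding nbhd_in_def by blast
  moreover have "infinite (constrained N)" if "N \<in> \<N>\<^sub>j" for N
  proof -
    have "N \<in> \<N>" "j \<in> constrained N"
      using that \<open>j \<in> J\<close> unfolding \<N>\<^sub>j_def constrained_def W_def by auto
    then show ?thesis
      using \<open>j \<notin> K\<close> unfolding K_def by blast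
  qed
  moreover have "countable \<N>\<^sub>j"
    using \<open>countable \<N>\<close> unfolding \<N>\<^sub>j_def by simp
  moreover have "\<forall>i\<in>J. e i \<in> topspace (T i) \<and> e i \<notin> U i"
    using U e by blast
  ultimately show False
    using Sigma_topology_open_not_covered[of "\<N>\<^sub>j" J U e T Q z]
    unfolding X_def constrained_def by blast
qed

section \<open>The Frechet--Urysohn property\<close>

lemma closure_of_Sigma_topology_meets_cylinders:
  assumes "x \<in> Sigma_topology J T closure_of A" "finite F" "F \<subseteq> J"
    and "\<And>i. i \<in> F \<Longrightarrow> openin (T i) (V i) \<and> x i \<in> V i"
  shows "\<exists>a\<in>A. \<forall>i\<in>F. a i \<in> V i"
proof -
  define X where "X = Sigma_topology J T"
  define Nx where "Nx = (\<Inter>i\<in>F. {y \<in> topspace X. y i \<in> V i}) \<inter> topspace X"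
  have "openin X Nx"
    unfolding Nx_def X_def
    by (intro openin_INT assms(2) openin_Sigma_topology_cylinder) (use assms(3,4) in auto)
  moreover have "x \<in> Nx"
    using assms(1,4) closure_of_subset_topspace unfolding Nx_def X_def by fastforce
  ultimately obtain a where "a \<in> A" "a \<in> Nx"
    using assms(1) unfolding in_closure_of X_def by blast
  then show ?thesis
    unfolding Nx_def by blast
qed

lemma Frechet_Urysohn_Sigma_topology:
  fixes J :: "'j set" and T :: "'j \<Rightarrow> 'a::real_vector topology"
  assumes "\<And>j. j \<in> J \<Longrightarrow> first_countable (T j)"
  shows "Frechet_Urysohn_space (Sigma_topology J T)"
  unfolding Frechet_Urysohn_space_def
proof (intro allI impI, elim conjE)
  fix A x
  assume A: "A \<subseteq> topspace (Sigma_topology J T)" and x: "x \<in> Sigma_topology J T closure_of A"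
  define S where "S = Sigma_product J (\<lambda>j. topspace (T j))"
  have "x \<in> S"
    using closure_of_subset_topspace x unfolding S_def by (metis subsetD topspace_Sigma_topology)
  then have x_coord: "x i \<in> topspace (T i)" if "i \<in> J" for i
    using that unfolding S_def by (rule Sigma_product_coordinate)
  have "\<forall>i\<in>J. \<exists>b :: nat \<Rightarrow> 'a set. (\<forall>k. openin (T i) (b k) \<and> x i \<in> b k) \<and> (\<forall>U. openin (T i) U \<and> x i \<in> U \<longrightarrow> (\<exists>k. b k \<subseteq> U))"
    by (intro ballI first_countable_nbhd_sequence assms(1) x_coord)
  then obtain b :: "'j \<Rightarrow> nat \<Rightarrow> 'a set" where b: "\<forall>i\<in>J. (\<forall>k. openin (T i) (b i k) \<and> x i \<in> b i k)
      \<and> (\<forall>U. openin (T i) U \<and> x i \<in> U \<longrightarrow> (\<exists>k. b i k \<subseteq> U))"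
    by (rule bchoice[THEN exE])
  define step where "step n F s s' \<longleftrightarrow> s' \<in> A \<and> (\<forall>i\<in>F \<inter> J. \<forall>k\<le>n. s' i \<in> b i k)"
    for n F and s s' :: "'j \<Rightarrow> 'a"
  have step_exists: "\<exists>s'. s' \<in> S \<and> step n F s s'" if "finite F" "s \<in> S" for n F s
  proof -
    have "\<exists>a\<in>A. \<forall>i\<in>F \<inter> J. a i \<in> (\<Inter>k\<le>n. b i k)"
      using b \<open>finite F\<close> by (intro closure_of_Sigma_topology_meets_cylinders[OF x]) auto
    then show ?thesis
      using A unfolding step_def S_def by auto
  qed
  have countable_support: "countable {i \<in> J. s i \<noteq> 0}" if "s \<in> S" for s
    using that unfolding S_def Sigma_product_def by simp
  obtain y F where y0: "y 0 = x"
    and y: "\<forall>n. y n \<in> S \<and> finite (F n) \<and> step n (F n) (y n) (y (Suc n))"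
    and F: "\<forall>l. \<forall>i\<in>{i \<in> J. y l i \<noteq> 0}. \<forall>\<^sub>F n in sequentially. i \<in> F n"
    using diagonal_bookkeeping[where P="\<lambda>s. s \<in> S" and supp="\<lambda>s. {i \<in> J. s i \<noteq> 0}" and R=step,
        OF \<open>x \<in> S\<close> countable_support step_exists] by blast
  have "limitin (T i) (\<lambda>n. y (Suc n) i) (x i) sequentially" if "i \<in> J" for i
  proof (cases "\<exists>l. y l i \<noteq> 0")
    case True
    then have "\<forall>\<^sub>F n in sequentially. i \<in> F n"
      using F \<open>i \<in> J\<close> by blast
    then have "\<forall>\<^sub>F n in sequentially. \<forall>k\<le>n. y (Suc n) i \<in> b i k"
      by (rule eventually_mono) (use y \<open>i \<in> J\<close> in \<open>auto simp: step_def\<close>)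
    then show ?thesis
      using b x_coord \<open>i \<in> J\<close> by (intro limitin_sequentially_nbhd_sequence[where b="b i"]) auto
  next
    case False
    then show ?thesis
      using y0 x_coord[OF \<open>i \<in> J\<close>] by auto
  qed
  moreover have "y (Suc n) \<in> A" for n
    using y unfolding step_def by simp
  ultimately show "\<exists>f. range f \<subseteq> A \<and> limitin (Sigma_topology J T) f x sequentially"
    using \<open>x \<in> S\<close> A unfolding limitin_Sigma_topology S_def
    by (intro exI[of _ "\<lambda>n. y (Suc n)"]) (auto intro!: always_eventually)
qed

section \<open>The Baire property\<close>

lemma Sigma_product_componentwise_limit:
  fixes p :: "nat \<Rightarrow> 'j \<Rightarrow> 'a::real_vector"
  assumes "\<And>m. p m \<in> Sigma_product J (\<lambda>j. topspace (T j))"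
    and "\<And>j. j \<in> J \<Longrightarrow> 0 \<in> topspace (T j)"
    and "\<And>i. i \<in> J \<Longrightarrow> \<exists>m. p m i \<noteq> 0 \<Longrightarrow> \<exists>l. limitin (T i) (\<lambda>m. p m i) l sequentially"
  shows "\<exists>y\<in>Sigma_product J (\<lambda>j. topspace (T j)). \<forall>i\<in>J. limitin (T i) (\<lambda>m. p m i) (y i) sequentially"
proof -
  define y where "y = restrict (\<lambda>i. if \<exists>m. p m i \<noteq> 0
      then SOME l. limitin (T i) (\<lambda>m. p m i) l sequentially else 0) J"
  have lim: "limitin (T i) (\<lambda>m. p m i) (y i) sequentially" if "i \<in> J" for i
  proof (cases "\<exists>m. p m i \<noteq> 0")
    case True
    then show ?thesis
      using someI_ex[OF assms(3)[OF that True]] that unfolding y_def by simp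
  next
    case False
    then show ?thesis
      using assms(2)[OF that] that unfolding y_def by simp
  qed
  then have "y \<in> Pi\<^sub>E J (\<lambda>j. topspace (T j))"
    unfolding y_def by (auto intro: limitin_topspace)
  moreover have "{i \<in> J. y i \<noteq> 0} \<subseteq> (\<Union>m. {i \<in> J. p m i \<noteq> 0})"
    unfolding y_def by auto
  moreover have "countable (\<Union>m. {i \<in> J. p m i \<noteq> 0})"
    using assms(1) unfolding Sigma_product_def by auto
  ultimately have "y \<in> Sigma_product J (\<lambda>j. topspace (T j))"
    unfolding Sigma_product_def by (blast intro: countable_subset)
  with lim show ?thesis
    by blast
qed

lemma limit_in_nested_boxes:
  assumes "\<And>n. open_box J T (U n)" "\<And>m. p m \<in> Pi\<^sub>E J (U m)"
    and "\<And>n i. i \<in> J \<Longrightarrow> T i closure_of U (Suc n) i \<subseteq> U n i"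
    and "y \<in> extensional J" "\<And>i. i \<in> J \<Longrightarrow> limitin (T i) (\<lambda>m. p m i) (y i) sequentially"
  shows "y \<in> Pi\<^sub>E J (U n)"
proof -
  have "y i \<in> U n i" if "i \<in> J" for i
  proof -
    have "U m i \<subseteq> U (Suc n) i" if "Suc n \<le> m" for m
      using closure_of_nested_antimono[of "T i" "\<lambda>n. U n i"] assms(1,3) \<open>i \<in> J\<close> that
      unfolding open_box_def by blast
    then have "\<forall>\<^sub>F m in sequentially. p m i \<in> T i closure_of U (Suc n) i"
      using assms(1,2) \<open>i \<in> J\<close> closure_of_subset openin_subset unfolding open_box_def eventually_sequentially
      by (metis PiE_mem subsetD)
    then have "y i \<in> T i closure_of U (Suc n) i"
      by (intro limitin_closedin[OF assms(5)[OF \<open>i \<in> J\<close>]]) simp_all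
    then show ?thesis
      using assms(3) \<open>i \<in> J\<close> by blast
  qed
  then show ?thesis
    using assms(4) by (auto simp: PiE_iff)
qed

lemma Sigma_dense_open_box_inside:
  assumes "openin (Sigma_topology J T) G"
    and "Sigma_topology J T closure_of G = topspace (Sigma_topology J T)"
    and "open_box J T U" "p \<in> Sigma_product J (\<lambda>j. topspace (T j)) \<inter> Pi\<^sub>E J U"
  shows "\<exists>p' U'. open_box J T U' \<and> p' \<in> Sigma_product J (\<lambda>j. topspace (T j)) \<inter> Pi\<^sub>E J U'
           \<and> Sigma_product J (\<lambda>j. topspace (T j)) \<inter> Pi\<^sub>E J U' \<subseteq> G \<and> (\<forall>i\<in>J. U' i \<subseteq> U i)"
proof -
  define S where "S = Sigma_product J (\<lambda>j. topspace (T j))"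
  have "openin (Sigma_topology J T) (S \<inter> Pi\<^sub>E J U)"
    unfolding S_def using assms(3) by (rule openin_Sigma_topology_box)
  then obtain p' where p': "p' \<in> G \<inter> (S \<inter> Pi\<^sub>E J U)"
    using assms(2,4) unfolding dense_intersects_open S_def by blast
  have "openin (Sigma_topology J T) (G \<inter> (S \<inter> Pi\<^sub>E J U))"
    using assms(1) \<open>openin _ (S \<inter> Pi\<^sub>E J U)\<close> by blast
  then obtain U\<^sub>2 where "open_box J T U\<^sub>2" "p' \<in> Pi\<^sub>E J U\<^sub>2" and U\<^sub>2: "S \<inter> Pi\<^sub>E J U\<^sub>2 \<subseteq> G \<inter> (S \<inter> Pi\<^sub>E J U)"
    using openin_Sigma_topology_imp_box p' unfolding S_def by metis
  have "open_box J T (\<lambda>i. U\<^sub>2 i \<inter> U i)"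
    using \<open>open_box J T U\<^sub>2\<close> assms(3) by (rule open_box_Int)
  moreover have "p' \<in> S \<inter> Pi\<^sub>E J (\<lambda>i. U\<^sub>2 i \<inter> U i)"
    using p' \<open>p' \<in> Pi\<^sub>E J U\<^sub>2\<close> by auto
  moreover have "S \<inter> Pi\<^sub>E J (\<lambda>i. U\<^sub>2 i \<inter> U i) \<subseteq> G"
    using U\<^sub>2 by (auto simp: PiE_iff)
  ultimately show ?thesis
    unfolding S_def by blast
qed

lemma Sigma_box_shrink:
  assumes metric: "\<And>j. j \<in> J \<Longrightarrow> Metric_space (M j) (d j) \<and> T j = Metric_space.mtopology (M j) (d j)"
    and "open_box J T U" "p \<in> Pi\<^sub>E J U" "finite F" "e > 0"
  shows "\<exists>U'. open_box J T U' \<and> p \<in> Pi\<^sub>E J U' \<and> (\<forall>i\<in>J. T i closure_of U' i \<subseteq> U i)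
           \<and> (\<forall>i\<in>F \<inter> J. \<forall>a\<in>U' i. \<forall>b\<in>U' i. d i a b < e)"
proof -
  have "\<forall>i\<in>J. \<exists>V. openin (T i) V \<and> p i \<in> V \<and> T i closure_of V \<subseteq> U i \<and> (\<forall>a\<in>V. \<forall>b\<in>V. d i a b < e)"
  proof
    fix i assume "i \<in> J"
    then show "\<exists>V. openin (T i) V \<and> p i \<in> V \<and> T i closure_of V \<subseteq> U i \<and> (\<forall>a\<in>V. \<forall>b\<in>V. d i a b < e)"
      using Metric_space.small_nbhd_closure_inside[of "M i" "d i" "U i" "p i" e] metric[of i]
        assms(2,3,5) unfolding open_box_def by (auto simp: PiE_iff)
  qed
  then obtain V where V: "\<forall>i\<in>J. openin (T i) (V i) \<and> p i \<in> V i \<and> T i closure_of V i \<subseteq> U i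
      \<and> (\<forall>a\<in>V i. \<forall>b\<in>V i. d i a b < e)"
    by (rule bchoice[THEN exE])
  define D where "D = F \<union> {i \<in> J. U i \<noteq> topspace (T i)}"
  define U' where "U' i = (if i \<in> D then V i else U i)" for i
  have "finite D"
    using assms(2,4) unfolding D_def open_box_def by simp
  moreover have "{i \<in> J. U' i \<noteq> topspace (T i)} \<subseteq> D"
    unfolding U'_def D_def by auto
  moreover have "\<forall>i\<in>J. openin (T i) (U' i)"
    using assms(2) V unfolding open_box_def U'_def by auto
  ultimately have "open_box J T U'"
    unfolding open_box_def by (blast intro: finite_subset)
  moreover have "p \<in> Pi\<^sub>E J U'"
    using assms(3) V unfolding U'_def by (auto simp: PiE_iff)
  moreover have "T i closure_of U' i \<subseteq> U i" if "i \<in> J" for i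
    using V that unfolding U'_def D_def by auto
  moreover have "\<forall>i\<in>F \<inter> J. \<forall>a\<in>U' i. \<forall>b\<in>U' i. d i a b < e"
    using V unfolding U'_def D_def by auto
  ultimately show ?thesis
    by blast
qed

lemma Sigma_box_refine:
  assumes metric: "\<And>j. j \<in> J \<Longrightarrow> Metric_space (M j) (d j) \<and> T j = Metric_space.mtopology (M j) (d j)"
    and "openin (Sigma_topology J T) G"
    and "Sigma_topology J T closure_of G = topspace (Sigma_topology J T)"
    and "open_box J T U" "p \<in> Sigma_product J (\<lambda>j. topspace (T j)) \<inter> Pi\<^sub>E J U"
    and "finite F" "e > 0"
  shows "\<exists>p' U'. open_box J T U' \<and> p' \<in> Sigma_product J (\<lambda>j. topspace (T j)) \<inter> Pi\<^sub>E J U'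
           \<and> Sigma_product J (\<lambda>j. topspace (T j)) \<inter> Pi\<^sub>E J U' \<subseteq> G
           \<and> (\<forall>i\<in>J. T i closure_of U' i \<subseteq> U i) \<and> (\<forall>i\<in>F \<inter> J. \<forall>a\<in>U' i. \<forall>b\<in>U' i. d i a b < e)"
proof -
  define S where "S = Sigma_product J (\<lambda>j. topspace (T j))"
  obtain p' U\<^sub>1 where "open_box J T U\<^sub>1" and p': "p' \<in> S \<inter> Pi\<^sub>E J U\<^sub>1"
    and "S \<inter> Pi\<^sub>E J U\<^sub>1 \<subseteq> G" and U\<^sub>1: "\<forall>i\<in>J. U\<^sub>1 i \<subseteq> U i"
    using Sigma_dense_open_box_inside[OF assms(2-5)] unfolding S_def by blast
  have "p' \<in> Pi\<^sub>E J U\<^sub>1"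
    using p' by blast
  obtain U' where "open_box J T U'" "p' \<in> Pi\<^sub>E J U'" and U': "\<forall>i\<in>J. T i closure_of U' i \<subseteq> U\<^sub>1 i"
    and "\<forall>i\<in>F \<inter> J. \<forall>a\<in>U' i. \<forall>b\<in>U' i. d i a b < e"
    using Sigma_box_shrink[OF metric \<open>open_box J T U\<^sub>1\<close> \<open>p' \<in> Pi\<^sub>E J U\<^sub>1\<close> assms(6,7)] by blast
  moreover have "U' i \<subseteq> U\<^sub>1 i" if "i \<in> J" for i
  proof -
    have "U' i \<subseteq> topspace (T i)"
      using \<open>open_box J T U'\<close> that openin_subset unfolding open_box_def by blast
    then show ?thesis
      using closure_of_subset U' that by blast
  qed
  then have "S \<inter> Pi\<^sub>E J U' \<subseteq> S \<inter> Pi\<^sub>E J U\<^sub>1"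
    by (auto simp: PiE_iff)
  then have "S \<inter> Pi\<^sub>E J U' \<subseteq> G"
    using \<open>S \<inter> Pi\<^sub>E J U\<^sub>1 \<subseteq> G\<close> by blast
  ultimately show ?thesis
    using p' U\<^sub>1 unfolding S_def by blast
qed

lemma Sigma_nested_boxes_meet:
  fixes J :: "'j set" and T :: "'j \<Rightarrow> 'a::real_vector topology"
  assumes metric: "\<And>j. j \<in> J \<Longrightarrow> Metric_space (M j) (d j) \<and> T j = Metric_space.mtopology (M j) (d j)"
    and complete: "\<And>j. j \<in> J \<Longrightarrow> Metric_space.mcomplete (M j) (d j)"
    and zero_in: "\<And>j. j \<in> J \<Longrightarrow> 0 \<in> topspace (T j)"
    and boxes: "\<And>n. open_box J T (U n)" "\<And>n. p n \<in> Sigma_product J (\<lambda>j. topspace (T j)) \<inter> Pi\<^sub>E J (U n)"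
    and nested: "\<And>n i. i \<in> J \<Longrightarrow> T i closure_of U (Suc n) i \<subseteq> U n i"
    and small: "\<And>i. i \<in> J \<Longrightarrow> \<exists>m. p m i \<noteq> 0 \<Longrightarrow>
        \<forall>\<^sub>F n in sequentially. \<forall>a\<in>U (Suc n) i. \<forall>b\<in>U (Suc n) i. d i a b < inverse (real (Suc n))"
  shows "\<exists>y\<in>Sigma_product J (\<lambda>j. topspace (T j)). \<forall>n. y \<in> Pi\<^sub>E J (U n)"
proof -
  define S where "S = Sigma_product J (\<lambda>j. topspace (T j))"
  have pS: "p m \<in> S" and pU: "p m \<in> Pi\<^sub>E J (U m)" for m
    using boxes(2) unfolding S_def by blast+
  have "\<exists>l. limitin (T i) (\<lambda>m. p m i) l sequentially" if i: "i \<in> J" "\<exists>m. p m i \<noteq> 0" for i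
  proof -
    interpret Metric_space "M i" "d i"
      using metric[OF \<open>i \<in> J\<close>] by blast
    have "\<exists>l. limitin mtopology (\<lambda>m. p m i) l sequentially"
    proof (rule nested_shrinking_convergent[where A="\<lambda>n. U n i"])
      show "mcomplete"
        using complete[OF \<open>i \<in> J\<close>] .
      show "openin mtopology (U n i)" for n
        using boxes(1)[of n] metric[OF \<open>i \<in> J\<close>] \<open>i \<in> J\<close> unfolding open_box_def by auto
      show "mtopology closure_of U (Suc n) i \<subseteq> U n i" for n
        using nested[OF \<open>i \<in> J\<close>] metric[OF \<open>i \<in> J\<close>] by auto
      show "p m i \<in> U m i" for m
        using pU[of m] \<open>i \<in> J\<close> by (auto simp: PiE_iff)
    qed (use small[OF i] in simp)
    then show ?thesis
      using metric[OF \<open>i \<in> J\<close>] by simp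
  qed
  then obtain y where "y \<in> S" and lim: "\<forall>i\<in>J. limitin (T i) (\<lambda>m. p m i) (y i) sequentially"
    using Sigma_product_componentwise_limit[of p J T, OF pS[unfolded S_def] zero_in] unfolding S_def by blast
  have "y \<in> extensional J"
    using \<open>y \<in> S\<close> unfolding S_def by (rule Sigma_product_extensional)
  then have "y \<in> Pi\<^sub>E J (U n)" for n
    using limit_in_nested_boxes[of J T U p y n] boxes(1) pU nested lim by blast
  with \<open>y \<in> S\<close> show ?thesis
    unfolding S_def by blast
qed

lemma Sigma_dense_sequence_meets_box:
  fixes J :: "'j set" and T :: "'j \<Rightarrow> 'a::real_vector topology" and G :: "nat \<Rightarrow> ('j \<Rightarrow> 'a) set"
  assumes metric: "\<And>j. j \<in> J \<Longrightarrow> Metric_space (M j) (d j) \<and> T j = Metric_space.mtopology (M j) (d j)"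
    and complete: "\<And>j. j \<in> J \<Longrightarrow> Metric_space.mcomplete (M j) (d j)"
    and zero_in: "\<And>j. j \<in> J \<Longrightarrow> 0 \<in> topspace (T j)"
    and dense: "\<And>n. openin (Sigma_topology J T) (G n)"
      "\<And>n. Sigma_topology J T closure_of G n = topspace (Sigma_topology J T)"
    and "open_box J T U\<^sub>0" "p\<^sub>0 \<in> Sigma_product J (\<lambda>j. topspace (T j)) \<inter> Pi\<^sub>E J U\<^sub>0"
  shows "\<exists>y\<in>Sigma_product J (\<lambda>j. topspace (T j)) \<inter> Pi\<^sub>E J U\<^sub>0. \<forall>n. y \<in> G n"
proof -
  define S where "S = Sigma_product J (\<lambda>j. topspace (T j))"
  \<comment> \<open>A state is a point together with a basic box around it; stage \<open>n\<close> moves into \<open>G n\<close>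
    and makes the box \<open>1/(n+1)\<close>-small at the coordinates scheduled by the bookkeeping.\<close>
  define Inv where "Inv pU \<longleftrightarrow> fst pU \<in> S \<inter> Pi\<^sub>E J (snd pU) \<and> open_box J T (snd pU)"
    for pU :: "('j \<Rightarrow> 'a) \<times> ('j \<Rightarrow> 'a set)"
  define step where "step n F pU pU' \<longleftrightarrow> S \<inter> Pi\<^sub>E J (snd pU') \<subseteq> G n
      \<and> (\<forall>i\<in>J. T i closure_of snd pU' i \<subseteq> snd pU i)
      \<and> (\<forall>i\<in>F \<inter> J. \<forall>a\<in>snd pU' i. \<forall>b\<in>snd pU' i. d i a b < inverse (real (Suc n)))"
    for n F and pU pU' :: "('j \<Rightarrow> 'a) \<times> ('j \<Rightarrow> 'a set)"
  have step_exists: "\<exists>pU'. Inv pU' \<and> step n F pU pU'" if "finite F" "Inv pU" for n F pU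
  proof -
    have box: "open_box J T (snd pU)" "fst pU \<in> S \<inter> Pi\<^sub>E J (snd pU)"
      using \<open>Inv pU\<close> unfolding Inv_def by simp_all
    have e: "inverse (real (Suc n)) > 0"
      by simp
    obtain p' U' where "open_box J T U'" "p' \<in> S \<inter> Pi\<^sub>E J U'" "S \<inter> Pi\<^sub>E J U' \<subseteq> G n"
      "\<forall>i\<in>J. T i closure_of U' i \<subseteq> snd pU i"
      "\<forall>i\<in>F \<inter> J. \<forall>a\<in>U' i. \<forall>b\<in>U' i. d i a b < inverse (real (Suc n))"
      using Sigma_box_refine[where J=J and T=T and M=M and d=d and G="G n" and e="inverse (real (Suc n))",
          OF metric dense[of n] box[unfolded S_def] \<open>finite F\<close> e]
      unfolding S_def by blast
    then have "Inv (p', U') \<and> step n F pU (p', U')"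
      unfolding Inv_def step_def by simp
    then show ?thesis
      by blast
  qed
  have countable_support: "countable {i \<in> J. fst pU i \<noteq> 0}" if "Inv pU" for pU
    using that unfolding Inv_def S_def Sigma_product_def by auto
  have "Inv (p\<^sub>0, U\<^sub>0)"
    using assms(6,7) unfolding Inv_def S_def by auto
  from diagonal_bookkeeping[where P=Inv and supp="\<lambda>pU. {i \<in> J. fst pU i \<noteq> 0}" and R=step,
      OF this countable_support step_exists]
  obtain pU F where "pU 0 = (p\<^sub>0, U\<^sub>0)"
    and pU: "\<forall>n. Inv (pU n) \<and> finite (F n) \<and> step n (F n) (pU n) (pU (Suc n))"
    and F: "\<forall>l. \<forall>i\<in>{i \<in> J. fst (pU l) i \<noteq> 0}. \<forall>\<^sub>F n in sequentially. i \<in> F n"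
    by blast
  define p where "p n = fst (pU n)" for n
  define U where "U n = snd (pU n)" for n
  have small: "\<forall>\<^sub>F n in sequentially. \<forall>a\<in>U (Suc n) i. \<forall>b\<in>U (Suc n) i. d i a b < inverse (real (Suc n))"
    if "i \<in> J" and nonzero: "\<exists>m. p m i \<noteq> 0" for i
  proof -
    obtain m where "p m i \<noteq> 0"
      using nonzero by blast
    then have "\<forall>\<^sub>F n in sequentially. i \<in> F n"
      using F[rule_format, where l=m] \<open>i \<in> J\<close> unfolding p_def by simp
    moreover have "\<forall>a\<in>U (Suc n) i. \<forall>b\<in>U (Suc n) i. d i a b < inverse (real (Suc n))" if "i \<in> F n" for n
      using pU \<open>i \<in> J\<close> that unfolding step_def U_def by blast
    ultimately show ?thesis
      by (rule eventually_mono)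
  qed
  have open_U: "open_box J T (U n)"
    and p_in: "p n \<in> Sigma_product J (\<lambda>j. topspace (T j)) \<inter> Pi\<^sub>E J (U n)" for n
    using pU unfolding Inv_def p_def U_def S_def by auto
  have nested: "T i closure_of U (Suc n) i \<subseteq> U n i" if "i \<in> J" for n i
    using pU that unfolding step_def U_def by blast
  from Sigma_nested_boxes_meet[where J=J and T=T and M=M and d=d and U=U and p=p,
      OF metric complete zero_in open_U p_in nested small]
  obtain y where "y \<in> S" and y: "\<And>n. y \<in> Pi\<^sub>E J (U n)"
    unfolding S_def by blast
  moreover have "y \<in> G n" for n
    using pU y[of "Suc n"] \<open>y \<in> S\<close> unfolding step_def U_def by blast
  ultimately show ?thesis
    using y[of 0] \<open>pU 0 = (p\<^sub>0, U\<^sub>0)\<close> unfolding S_def U_def by auto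
qed

lemma Baire_space_Sigma_topology:
  fixes J :: "'j set" and T :: "'j \<Rightarrow> 'a::real_vector topology"
  assumes zero_in: "\<And>j. j \<in> J \<Longrightarrow> 0 \<in> topspace (T j)"
    and "\<And>j. j \<in> J \<Longrightarrow> completely_metrizable_space (T j)"
  shows "Baire_space (Sigma_topology J T)"
  unfolding Baire_space_def
proof (intro allI impI, elim conjE)
  obtain M :: "'j \<Rightarrow> 'a set" and d where metrics: "\<forall>j\<in>J. Metric_space (M j) (d j)
      \<and> Metric_space.mcomplete (M j) (d j) \<and> T j = Metric_space.mtopology (M j) (d j)"
    using completely_metrizable_family_metrics[of J T, OF assms(2)] by blast
  then have metric: "Metric_space (M j) (d j) \<and> T j = Metric_space.mtopology (M j) (d j)"
    and complete: "Metric_space.mcomplete (M j) (d j)" if "j \<in> J" for j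
    using that by blast+
  fix \<G> assume "countable \<G>"
    and dense: "\<forall>G\<in>\<G>. openin (Sigma_topology J T) G \<and> Sigma_topology J T closure_of G = topspace (Sigma_topology J T)"
  show "Sigma_topology J T closure_of (topspace (Sigma_topology J T) \<inter> \<Inter>\<G>) = topspace (Sigma_topology J T)"
    unfolding dense_intersects_open
  proof (intro allI impI, elim conjE)
    fix V assume "openin (Sigma_topology J T) V" "V \<noteq> {}"
    then obtain p where "p \<in> V"
      by blast
    then obtain U where "open_box J T U" "p \<in> Pi\<^sub>E J U"
      and U: "Sigma_product J (\<lambda>j. topspace (T j)) \<inter> Pi\<^sub>E J U \<subseteq> V"
      using openin_Sigma_topology_imp_box[OF \<open>openin _ V\<close>] by blast
    have "p \<in> Sigma_product J (\<lambda>j. topspace (T j))"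
      using \<open>p \<in> V\<close> openin_subset[OF \<open>openin _ V\<close>] by auto
    show "topspace (Sigma_topology J T) \<inter> \<Inter>\<G> \<inter> V \<noteq> {}"
    proof (cases "\<G> = {}")
      case True
      then show ?thesis
        using \<open>p \<in> V\<close> \<open>p \<in> Sigma_product J _\<close> by auto
    next
      case False
      then have G: "openin (Sigma_topology J T) (from_nat_into \<G> n)"
        "Sigma_topology J T closure_of from_nat_into \<G> n = topspace (Sigma_topology J T)" for n
        using dense from_nat_into by blast+
      have "p \<in> Sigma_product J (\<lambda>j. topspace (T j)) \<inter> Pi\<^sub>E J U"
        using \<open>p \<in> Pi\<^sub>E J U\<close> \<open>p \<in> Sigma_product J _\<close> by blast
      with metric complete zero_in G \<open>open_box J T U\<close>
      have "\<exists>y\<in>Sigma_product J (\<lambda>j. topspace (T j)) \<inter> Pi\<^sub>E J U. \<forall>n. y \<in> from_nat_into \<G> n"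
        by (intro Sigma_dense_sequence_meets_box[where G="from_nat_into \<G>" and p\<^sub>0=p])
      then obtain y where y: "y \<in> Sigma_product J (\<lambda>j. topspace (T j)) \<inter> Pi\<^sub>E J U"
        and "\<forall>n. y \<in> from_nat_into \<G> n"
        by blast
      have "y \<in> \<Inter>\<G>"
      proof
        fix G assume "G \<in> \<G>"
        then obtain n where "G = from_nat_into \<G> n"
          using from_nat_into_surj[OF \<open>countable \<G>\<close>] by metis
        with \<open>\<forall>n. y \<in> from_nat_into \<G> n\<close> show "y \<in> G"
          by blast
      qed
      then show ?thesis
        using y U by auto
    qed
  qed
qed

theorem mainTheorem15:
  fixes J :: "'j set" and T :: "'j \<Rightarrow> 'a::real_vector topology"
  assumes "uncountable J"
    and "\<And>j. j \<in> J \<Longrightarrow> subspace (topspace (T j))"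
    and "\<And>j. j \<in> J \<Longrightarrow> is_tvs (topspace (T j)) (T j) (+) (*\<^sub>R) 0"
    and "\<And>j. j \<in> J \<Longrightarrow> completely_metrizable_space (T j)"
    and "\<And>j. j \<in> J \<Longrightarrow> topspace (T j) \<noteq> {0}"
  shows "is_tvs (Sigma_product J (\<lambda>j. topspace (T j))) (Sigma_topology J T)
            (prod_add J) (prod_smul J) (prod_zero J)
       \<and> Baire_space (Sigma_topology J T)
       \<and> \<not> metrizable_space (Sigma_topology J T)
       \<and> Frechet_Urysohn_space (Sigma_topology J T)
       \<and> \<not> countable_cn_character (Sigma_topology J T)"
proof -
  have zero_in: "0 \<in> topspace (T j)" if "j \<in> J" for j
    using assms(3)[OF that] unfolding is_tvs_def by blast
  have metrizable: "metrizable_space (T j)" if "j \<in> J" for j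
    using assms(4)[OF that] by (rule completely_metrizable_imp_metrizable_space)
  have not_cn: "\<not> countable_cn_character (Sigma_topology J T)"
    using assms(1) zero_in assms(5) metrizable_imp_t1_space[OF metrizable]
    by (rule not_countable_cn_character_Sigma_topology)
  then have "\<not> metrizable_space (Sigma_topology J T)"
    using metrizable_imp_first_countable first_countable_imp_countable_cn_character by blast
  moreover have "Frechet_Urysohn_space (Sigma_topology J T)"
    using metrizable_imp_first_countable[OF metrizable] by (rule Frechet_Urysohn_Sigma_topology)
  moreover have "Baire_space (Sigma_topology J T)"
    using zero_in assms(4) by (rule Baire_space_Sigma_topology)
  moreover have "is_tvs (Sigma_product J (\<lambda>j. topspace (T j))) (Sigma_topology J T)
      (prod_add J) (prod_smul J) (prod_zero J)"
    using assms(3) by (rule is_tvs_Sigma_product)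
  ultimately show ?thesis
    using not_cn by blast
qed

end
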